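(* Let $A\in\mathbb{R}^{m\times n}_{\geq 0}$ be a matrix each of whose columns has at least one positive entry, and consider the covering LP $\min_{x\geq 0}\{\vec{1}^Tx : Ax\geq \vec{1}\}$ with optimal value $\mathrm{OPT}$. For each $i\in[n]$ let $a_i=\min_j\{A_{ji}:A_{ji}>0\}$, $r_i=\max_j\{A_{ji}:A_{ji}>0\}/a_i$, and $n_i=\max\{1,\lceil \log_2 r_i\rceil\}$. Define a new matrix $\bar{A}\in\mathbb{R}^{m\times(\sum_i n_i)}_{\geq 0}$ whose columns are indexed by pairs $(i,l)$ with $i\in[n]$, $l\in[n_i]$, by $$\bar{A}_{j,(i,l)}=\min\{A_{ji},\,2^l a_i\}.$$ Let $\overline{\mathrm{OPT}}$ be the optimal value of the LP $$\min\Big\{\sum_{i,l}\bar{x}_{(i,l)} \;:\; \bar{A}\bar{x}\geq\vec{1},\ \bar{x}\geq 0,\ \bar{x}_{(i,l)}\leq \frac{2}{2^l a_i}\ \text{for all } i\in[n],\ l\in[n_i]\Big\}.$$ Then $\mathrm{OPT}=\overline{\mathrm{OPT}}$.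
   Context: $\vec{1}$ denotes the all-ones vector. The new LP is obtained by duplicating column $i$ of $A$ $n_i$ times, capping the coefficients of the $l$-th copy at $2^l a_i$, and imposing an upper bound on each copied variable. *)

theory Defs
  imports Complex_Main "HOL-Library.Extended_Real"
begin

text \<open>Matrices A are functions nat => nat => real, entry A j i for row j < m, column i < n.
  Optimal values are taken in ereal (infimum of the empty set is +infinity).\<close>

definition cover_opt :: "nat \<Rightarrow> nat \<Rightarrow> (nat \<Rightarrow> nat \<Rightarrow> real) \<Rightarrow> ereal" where
  "cover_opt m n A = Inf {ereal (\<Sum>i<n. x i) | x :: nat \<Rightarrow> real.
      (\<forall>i<n. x i \<ge> 0) \<and> (\<forall>j<m. (\<Sum>i<n. A j i * x i) \<ge> 1)}"

definition col_min :: "nat \<Rightarrow> (nat \<Rightarrow> nat \<Rightarrow> real) \<Rightarrow> nat \<Rightarrow> real" where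
  "col_min m A i = Min {A j i | j. j < m \<and> A j i > 0}"

definition col_ratio :: "nat \<Rightarrow> (nat \<Rightarrow> nat \<Rightarrow> real) \<Rightarrow> nat \<Rightarrow> real" where
  "col_ratio m A i = Max {A j i | j. j < m \<and> A j i > 0} / col_min m A i"

definition col_copies :: "nat \<Rightarrow> (nat \<Rightarrow> nat \<Rightarrow> real) \<Rightarrow> nat \<Rightarrow> nat" where
  "col_copies m A i = nat (max 1 \<lceil>log 2 (col_ratio m A i)\<rceil>)"

definition bar_idx :: "nat \<Rightarrow> nat \<Rightarrow> (nat \<Rightarrow> nat \<Rightarrow> real) \<Rightarrow> (nat \<times> nat) set" where
  "bar_idx m n A = {(i, l). i < n \<and> 1 \<le> l \<and> l \<le> col_copies m A i}"

definition bar_A :: "nat \<Rightarrow> (nat \<Rightarrow> nat \<Rightarrow> real) \<Rightarrow> nat \<Rightarrow> nat \<times> nat \<Rightarrow> real" where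
  "bar_A m A j il = min (A j (fst il)) (2 ^ snd il * col_min m A (fst il))"

definition bar_opt :: "nat \<Rightarrow> nat \<Rightarrow> (nat \<Rightarrow> nat \<Rightarrow> real) \<Rightarrow> ereal" where
  "bar_opt m n A = Inf {ereal (\<Sum>p\<in>bar_idx m n A. x p) | x :: nat \<times> nat \<Rightarrow> real.
      (\<forall>p\<in>bar_idx m n A. 0 \<le> x p \<and> x p \<le> 2 / (2 ^ snd p * col_min m A (fst p))) \<and>
      (\<forall>j<m. (\<Sum>p\<in>bar_idx m n A. bar_A m A j p * x p) \<ge> 1)}"

end

theory Submission
  imports Defs
begin

text \<open>Merging the copies of a column turns a solution of the capped LP into a solution of the
  original one of the same cost, since the capped entries are at most the original ones.
  Conversely, a covering constraint never needs more than 1 from a single column, so column i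
  only has to supply min (A j i * x i) 1 to row j. This is achieved by a single copy l of the
  column, with weight s = min (x i) (1 / a i) and l the largest level with 2^l a i s \<le> 2:
  rows whose entry stays below the cap 2^l a i get at least min (A j i * x i) 1, and rows
  whose entry exceeds it get 2^l a i s > 1 by maximality of l.\<close>

lemma capped_copy_rounding:
  fixes a t :: real and N :: nat
  assumes a: "a > 0" and N: "N \<ge> 1" and t: "t \<ge> 0"
  shows "\<exists>l s. 1 \<le> l \<and> l \<le> N \<and> 0 \<le> s \<and> s \<le> t \<and> s \<le> 2 / (2 ^ l * a) \<and>
           (\<forall>c. a \<le> c \<and> c \<le> 2 ^ N * a \<longrightarrow> min (c * t) 1 \<le> min c (2 ^ l * a) * s)"
proof -
  define s where "s = min t (1 / a)"
  have s0: "0 \<le> s" and st: "s \<le> t" and sa: "s * a \<le> 1"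
    using t a by (auto simp: s_def min_def field_simps)
  define S where "S = {l. 1 \<le> l \<and> l \<le> N \<and> 2 ^ l * a * s \<le> (2::real)}"
  have "finite S" by (rule finite_subset[of _ "{..N}"]) (auto simp: S_def)
  moreover have "1 \<in> S" using N sa by (simp add: S_def mult.commute mult.left_commute)
  ultimately have "Max S \<in> S" by (intro Max_in) auto
  define l where "l = Max S"
  have l: "1 \<le> l" "l \<le> N" "2 ^ l * a * s \<le> 2"
    using \<open>Max S \<in> S\<close> by (auto simp: S_def l_def)
  have maximal: "2 ^ l * a * s > 1" if "l < N"
  proof (rule ccontr)
    assume "\<not> 2 ^ l * a * s > 1"
    then have "l + 1 \<in> S" using that by (auto simp: S_def)
    then have "l + 1 \<le> l" unfolding l_def by (rule Max_ge[OF \<open>finite S\<close>])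
    then show False by simp
  qed
  have s_cap: "s \<le> 2 / (2 ^ l * a)" using l(3) a by (simp add: pos_le_divide_eq mult.commute)
  have "min (c * t) 1 \<le> min c (2 ^ l * a) * s" if c: "a \<le> c" "c \<le> 2 ^ N * a" for c
  proof (cases "c \<le> 2 ^ l * a")
    case True
    have "min (c * t) 1 \<le> c * s"
    proof (cases "s = t")
      case False
      then have "s = 1 / a" by (auto simp: s_def min_def)
      then have "1 \<le> c * s" using c(1) a by simp
      then show ?thesis by simp
    qed simp
    then show ?thesis using True by simp
  next
    case False
    then have "l < N" using c(2) l(2) by (metis le_neq_implies_less)
    then show ?thesis using False maximal by (simp add: mult.assoc)
  qed
  then show ?thesis using l s0 st s_cap by blast
qed

lemma col_positive_entries:
  "{A j i | j. j < m \<and> A j i > 0} = (\<lambda>j. A j i) ` {j. j < m \<and> A j i > 0}"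
  by auto

lemma col_min_pos:
  assumes "\<exists>j<m. A j i > 0"
  shows "col_min m A i > 0"
  using assms Min_in[of "{A j i | j. j < m \<and> A j i > 0}"]
  unfolding col_min_def col_positive_entries by fastforce

lemma col_min_le:
  assumes "j < m" "A j i > 0"
  shows "col_min m A i \<le> A j i"
  using assms unfolding col_min_def col_positive_entries by (intro Min_le) auto

lemma col_entry_le_top_copy:
  assumes j: "j < m" "A j i > 0"
  shows "A j i \<le> 2 ^ col_copies m A i * col_min m A i"
proof -
  define r where "r = col_ratio m A i"
  have a: "col_min m A i > 0" using col_min_pos j by blast
  have "A j i \<le> Max {A j i | j. j < m \<and> A j i > 0}"
    using j unfolding col_positive_entries by (intro Max_ge) auto
  then have r: "r > 0" "A j i \<le> r * col_min m A i"
    using a j by (auto simp: r_def col_ratio_def)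
  have "log 2 r \<le> real (col_copies m A i)"
    unfolding col_copies_def r_def by linarith
  then have "2 powr log 2 r \<le> 2 powr real (col_copies m A i)"
    by (intro powr_mono) auto
  then have "r \<le> 2 ^ col_copies m A i"
    using r(1) by (simp add: powr_realpow)
  then show ?thesis using r(2) a by (meson mult_right_mono less_imp_le order_trans)
qed

lemma col_copies_ge_1: "col_copies m A i \<ge> 1"
  by (simp add: col_copies_def)

lemma sum_bar_idx:
  "(\<Sum>p\<in>bar_idx m n A. g p) = (\<Sum>i<n. \<Sum>l\<in>{1..col_copies m A i}. g (i, l))"
proof -
  have "bar_idx m n A = Sigma {..<n} (\<lambda>i. {1..col_copies m A i})"
    by (auto simp: bar_idx_def)
  then show ?thesis by (simp add: sum.Sigma)
qed

lemma sum_min_one_ge_one: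
  fixes g :: "nat \<Rightarrow> real"
  assumes "\<And>i. i < n \<Longrightarrow> g i \<ge> 0" "(\<Sum>i<n. g i) \<ge> 1"
  shows "(\<Sum>i<n. min (g i) 1) \<ge> 1"
proof (cases "\<exists>i<n. g i \<ge> 1")
  case True
  then obtain i where i: "i < n" "g i \<ge> 1" by blast
  have "min (g i) 1 \<le> (\<Sum>i<n. min (g i) 1)"
    by (rule member_le_sum) (use i assms in auto)
  then show ?thesis using i by simp
next
  case False
  then have "(\<Sum>i<n. min (g i) 1) = (\<Sum>i<n. g i)" by (intro sum.cong) auto
  then show ?thesis using assms by simp
qed

lemma cover_opt_le_bar_opt: "cover_opt m n A \<le> bar_opt m n A"
  unfolding bar_opt_def
proof (rule Inf_greatest, clarify)
  fix xb :: "nat \<times> nat \<Rightarrow> real"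
  assume xb: "\<forall>p\<in>bar_idx m n A. 0 \<le> xb p \<and> xb p \<le> 2 / (2 ^ snd p * col_min m A (fst p))"
    and rows: "\<forall>j<m. 1 \<le> (\<Sum>p\<in>bar_idx m n A. bar_A m A j p * xb p)"
  define x where "x i = (\<Sum>l\<in>{1..col_copies m A i}. xb (i, l))" for i
  have "\<forall>i<n. 0 \<le> x i"
    unfolding x_def using xb by (auto intro!: sum_nonneg simp: bar_idx_def)
  moreover have "1 \<le> (\<Sum>i<n. A j i * x i)" if "j < m" for j
  proof -
    have "1 \<le> (\<Sum>p\<in>bar_idx m n A. bar_A m A j p * xb p)" using rows that by auto
    also have "\<dots> \<le> (\<Sum>p\<in>bar_idx m n A. A j (fst p) * xb p)"
      using xb by (intro sum_mono mult_right_mono) (auto simp: bar_A_def)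
    also have "\<dots> = (\<Sum>i<n. A j i * x i)"
      unfolding sum_bar_idx x_def by (simp add: sum_distrib_left)
    finally show ?thesis .
  qed
  ultimately have "cover_opt m n A \<le> ereal (\<Sum>i<n. x i)"
    unfolding cover_opt_def by (intro Inf_lower) blast
  then show "cover_opt m n A \<le> ereal (\<Sum>p\<in>bar_idx m n A. xb p)"
    unfolding sum_bar_idx x_def .
qed

lemma bar_opt_le_cover_opt:
  assumes nonneg: "\<And>j i. j < m \<Longrightarrow> i < n \<Longrightarrow> A j i \<ge> 0"
    and pos: "\<And>i. i < n \<Longrightarrow> \<exists>j<m. A j i > 0"
  shows "bar_opt m n A \<le> cover_opt m n A"
  unfolding cover_opt_def
proof (rule Inf_greatest, clarify)
  fix x :: "nat \<Rightarrow> real"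
  assume x0: "\<forall>i<n. 0 \<le> x i" and rows: "\<forall>j<m. 1 \<le> (\<Sum>i<n. A j i * x i)"
  let ?a = "col_min m A" and ?N = "col_copies m A"
  define R where "R i l s \<longleftrightarrow> 1 \<le> l \<and> l \<le> ?N i \<and> 0 \<le> s \<and> s \<le> x i \<and>
      s \<le> 2 / (2 ^ l * ?a i) \<and>
      (\<forall>c. ?a i \<le> c \<and> c \<le> 2 ^ ?N i * ?a i \<longrightarrow> min (c * x i) 1 \<le> min c (2 ^ l * ?a i) * s)"
    for i l s
  have "\<exists>l s. R i l s" if "i < n" for i
    unfolding R_def using that x0 by (intro capped_copy_rounding col_min_pos pos col_copies_ge_1) auto
  then have "\<forall>i. \<exists>l s. i < n \<longrightarrow> R i l s" by blast
  then obtain L S where "\<forall>i<n. R i (L i) (S i)" by metis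
  then have LS: "\<forall>i<n. 1 \<le> L i \<and> L i \<le> ?N i \<and> 0 \<le> S i \<and> S i \<le> x i \<and>
      S i \<le> 2 / (2 ^ L i * ?a i) \<and>
      (\<forall>c. ?a i \<le> c \<and> c \<le> 2 ^ ?N i * ?a i \<longrightarrow> min (c * x i) 1 \<le> min c (2 ^ L i * ?a i) * S i)"
    unfolding R_def by blast
  define xb where "xb p = (if snd p = L (fst p) then S (fst p) else 0)" for p
  have single_copy: "(\<Sum>p\<in>bar_idx m n A. f p * xb p) = (\<Sum>i<n. f (i, L i) * S i)" for f
    unfolding sum_bar_idx
  proof (rule sum.cong[OF refl])
    fix i assume "i \<in> {..<n}"
    then have "L i \<in> {1..?N i}" using LS by auto
    then show "(\<Sum>l\<in>{1..?N i}. f (i, l) * xb (i, l)) = f (i, L i) * S i"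
      by (simp add: xb_def if_distrib sum.delta cong: if_cong)
  qed
  have "\<forall>p\<in>bar_idx m n A. 0 \<le> xb p \<and> xb p \<le> 2 / (2 ^ snd p * ?a (fst p))"
  proof
    fix p assume "p \<in> bar_idx m n A"
    then have "fst p < n" by (auto simp: bar_idx_def)
    then show "0 \<le> xb p \<and> xb p \<le> 2 / (2 ^ snd p * ?a (fst p))"
      using LS col_min_pos[of m A "fst p", OF pos[OF \<open>fst p < n\<close>]] unfolding xb_def by auto
  qed
  moreover have "1 \<le> (\<Sum>p\<in>bar_idx m n A. bar_A m A j p * xb p)" if j: "j < m" for j
  proof -
    have "1 \<le> (\<Sum>i<n. min (A j i * x i) 1)"
      using rows j nonneg x0 by (intro sum_min_one_ge_one) auto
    also have "\<dots> \<le> (\<Sum>i<n. bar_A m A j (i, L i) * S i)"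
    proof (rule sum_mono)
      fix i assume "i \<in> {..<n}"
      then have i: "i < n" by simp
      show "min (A j i * x i) 1 \<le> bar_A m A j (i, L i) * S i"
      proof (cases "A j i > 0")
        case True
        then show ?thesis using LS i col_min_le[of j m A i, OF j True]
          col_entry_le_top_copy[of j m A i, OF j True]
          by (simp add: bar_A_def)
      next
        case False
        then have "A j i = 0" using nonneg[OF j i] by simp
        then show ?thesis using LS i col_min_pos[of m A i, OF pos[OF i]] by (simp add: bar_A_def)
      qed
    qed
    also have "\<dots> = (\<Sum>p\<in>bar_idx m n A. bar_A m A j p * xb p)"
      by (rule single_copy[symmetric])
    finally show ?thesis .
  qed
  ultimately have "bar_opt m n A \<le> ereal (\<Sum>p\<in>bar_idx m n A. xb p)"
    unfolding bar_opt_def by (intro Inf_lower) blast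
  also have "(\<Sum>p\<in>bar_idx m n A. xb p) \<le> (\<Sum>i<n. x i)"
    using single_copy[of "\<lambda>_. 1"] LS by (auto intro!: sum_mono)
  finally show "bar_opt m n A \<le> ereal (\<Sum>i<n. x i)" by simp
qed

theorem lemma1:
  fixes m n :: nat and A :: "nat \<Rightarrow> nat \<Rightarrow> real"
  assumes "\<And>j i. j < m \<Longrightarrow> i < n \<Longrightarrow> A j i \<ge> 0"
    and "\<And>i. i < n \<Longrightarrow> \<exists>j<m. A j i > 0"
  shows "cover_opt m n A = bar_opt m n A"
  using cover_opt_le_bar_opt bar_opt_le_cover_opt[OF assms] by (rule antisym)

end
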